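(* Let $\alpha:A^{\Delta}\to(H_1,V_1)$ and $\beta:A^{\Delta}\to(H_2,V_2)$ be homomorphisms onto finite forest algebras (with idempotent and commutative horizontal monoids) such that $\beta$ factors through $\alpha$. If $\alpha$ is nonconfusing, then so is $\beta$.
   Context: $A^{\Delta}=(H_A,V_A)$: free forest algebra of forests (finite ordered sequences of finite ordered $A$-labelled trees, under concatenation) and contexts (forests with one hole, acting by substitution) over $A$. A forest algebra $(H,V)$: additive monoid $H$, monoid $V$ acting faithfully on the left, containing $g\mapsto g+h$, $g\mapsto h+g$. $\beta$ factors through $\alpha$ if $\alpha(s)=\alpha(s')$ implies $\beta(s)=\beta(s')$. Reachability in $(H,V)$: $h\le h'$ iff $h=vh'$ for some $v\in V$; reachability classes are classes of mutual reachability; $h>\Gamma$ means the class of $h$ is strictly above $\Gamma$. For $\gamma:A^{\Delta}\to(H,V)$ and a class $\Gamma$, $\gamma_\Gamma:A^{\Delta}\to(H_\Gamma,V_\Gamma)$ is the quotient identifying all elements of $\{h:h\not>\Gamma\}$ to one absorbing element $\infty$. For a forest $s$, $s^{\gamma_\Gamma}$ relabels each node whose subtree is $at$ by $(a,\gamma_\Gamma(t))$. For an alphabet $B$, $\sim_0$ is total on forests over $B$, and $s\sim_{k+1}s'$ iff $\{(b_i,[s_i]_{\sim_k})\}$ coincide where $s=b_1s_1+\cdots+b_rs_r$. $s_1\equiv_{\gamma,k,\Gamma}s_2$ iff $(s_1)^{\gamma_\Gamma}\sim_k(s_2)^{\gamma_\Gamma}$ and $\gamma(s_1),\gamma(s_2)\in\Gamma$.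 $\gamma$ is nonconfusing if there exists $k>0$ such that for every reachability class $\Gamma$ of the target algebra, $s_1\equiv_{\gamma,k,\Gamma}s_2$ implies $\gamma(s_1)=\gamma(s_2)$. *)

theory Defs
  imports Main
begin

datatype 'a tree = Node (label: 'a) (children: "'a tree list")

type_synonym 'a forest = "'a tree list"

text \<open>Contexts: forests with exactly one hole.
  Hole l r is the context l + [] + r;
  CNode l a c r is the context l + a(c) + r.\<close>
datatype 'a ctx = Hole "'a forest" "'a forest" | CNode "'a forest" 'a "'a ctx" "'a forest"

fun fill :: "'a ctx \<Rightarrow> 'a forest \<Rightarrow> 'a forest" where
  "fill (Hole l r) t = l @ t @ r"
| "fill (CNode l a c r) t = l @ [Node a (fill c t)] @ r"

fun comp :: "'a ctx \<Rightarrow> 'a ctx \<Rightarrow> 'a ctx" where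
  "comp (Hole l r) (Hole l' r') = Hole (l @ l') (r' @ r)"
| "comp (Hole l r) (CNode l' a c r') = CNode (l @ l') a c (r' @ r)"
| "comp (CNode l a c r) q = CNode l a (comp c q) r"

abbreviation empty_ctx :: "'a ctx" where "empty_ctx \<equiv> Hole [] []"

text \<open>A forest algebra (H,V): H is the whole carrier type 'h with its additive monoid
  structure; since V acts faithfully on H, V is represented as a set of functions
  H \<Rightarrow> H (the monoid operation being composition, the action application).\<close>
definition forest_algebra :: "('h::monoid_add \<Rightarrow> 'h) set \<Rightarrow> bool" where
  "forest_algebra V \<longleftrightarrow> id \<in> V \<and> (\<forall>f\<in>V. \<forall>g\<in>V. f \<circ> g \<in> V)
     \<and> (\<forall>h. (\<lambda>g. g + h) \<in> V \<and> (\<lambda>g. h + g) \<in> V)"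

definition fa_hom :: "('a forest \<Rightarrow> 'h::monoid_add) \<Rightarrow> ('a ctx \<Rightarrow> 'h \<Rightarrow> 'h)
    \<Rightarrow> ('h \<Rightarrow> 'h) set \<Rightarrow> bool" where
  "fa_hom gH gV V \<longleftrightarrow> (\<forall>p. gV p \<in> V)
     \<and> gH [] = 0 \<and> (\<forall>s t. gH (s @ t) = gH s + gH t)
     \<and> gV empty_ctx = id \<and> (\<forall>p q. gV (comp p q) = gV p \<circ> gV q)
     \<and> (\<forall>p t. gH (fill p t) = gV p (gH t))"

definition fa_onto :: "('a forest \<Rightarrow> 'h) \<Rightarrow> ('a ctx \<Rightarrow> 'h \<Rightarrow> 'h) \<Rightarrow> ('h \<Rightarrow> 'h) set \<Rightarrow> bool" where
  "fa_onto gH gV V \<longleftrightarrow> surj gH \<and> range gV = V"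

definition factors_through ::
  "('a forest \<Rightarrow> 'h2) \<Rightarrow> ('a ctx \<Rightarrow> 'h2 \<Rightarrow> 'h2) \<Rightarrow> ('a forest \<Rightarrow> 'h1) \<Rightarrow> ('a ctx \<Rightarrow> 'h1 \<Rightarrow> 'h1) \<Rightarrow> bool" where
  "factors_through bH bV aH aV \<longleftrightarrow>
     (\<forall>s s'. aH s = aH s' \<longrightarrow> bH s = bH s') \<and> (\<forall>p p'. aV p = aV p' \<longrightarrow> bV p = bV p')"

definition reach :: "('h \<Rightarrow> 'h) set \<Rightarrow> 'h \<Rightarrow> 'h \<Rightarrow> bool" where
  "reach V h h' \<longleftrightarrow> (\<exists>v\<in>V. h = v h')"

definition reach_class_of :: "('h \<Rightarrow> 'h) set \<Rightarrow> 'h \<Rightarrow> 'h set" where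
  "reach_class_of V h = {h'. reach V h h' \<and> reach V h' h}"

definition reach_classes :: "('h \<Rightarrow> 'h) set \<Rightarrow> 'h set set" where
  "reach_classes V = range (reach_class_of V)"

definition above :: "('h \<Rightarrow> 'h) set \<Rightarrow> 'h \<Rightarrow> 'h set \<Rightarrow> bool" where
  "above V h \<Gamma> \<longleftrightarrow> (\<forall>g\<in>\<Gamma>. reach V g h \<and> \<not> reach V h g)"

text \<open>gamma_Gamma on forests: all values not above Gamma are identified to the absorbing
  element infinity (represented by None).\<close>
definition gamma_Gamma :: "('a forest \<Rightarrow> 'h) \<Rightarrow> ('h \<Rightarrow> 'h) set \<Rightarrow> 'h set \<Rightarrow> 'a forest \<Rightarrow> 'h option" where
  "gamma_Gamma gH V \<Gamma> t = (if above V (gH t) \<Gamma> then Some (gH t) else None)"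

fun relabel :: "('a forest \<Rightarrow> 'c) \<Rightarrow> 'a tree \<Rightarrow> ('a \<times> 'c) tree" where
  "relabel f (Node a t) = Node (a, f t) (map (relabel f) t)"

definition relabel_forest :: "('a forest \<Rightarrow> 'c) \<Rightarrow> 'a forest \<Rightarrow> ('a \<times> 'c) forest" where
  "relabel_forest f s = map (relabel f) s"

primrec sim :: "nat \<Rightarrow> 'b forest \<Rightarrow> 'b forest \<Rightarrow> bool" where
  "sim 0 = (\<lambda>s s'. True)"
| "sim (Suc k) = (\<lambda>s s'.
      (\<lambda>x. (label x, {u. sim k (children x) u})) ` set s
    = (\<lambda>x. (label x, {u. sim k (children x) u})) ` set s')"

definition equiv_k :: "('a forest \<Rightarrow> 'h) \<Rightarrow> ('h \<Rightarrow> 'h) set \<Rightarrow> nat \<Rightarrow> 'h set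
    \<Rightarrow> 'a forest \<Rightarrow> 'a forest \<Rightarrow> bool" where
  "equiv_k gH V k \<Gamma> s1 s2 \<longleftrightarrow>
     sim k (relabel_forest (gamma_Gamma gH V \<Gamma>) s1) (relabel_forest (gamma_Gamma gH V \<Gamma>) s2)
     \<and> gH s1 \<in> \<Gamma> \<and> gH s2 \<in> \<Gamma>"

definition nonconfusing :: "('a forest \<Rightarrow> 'h) \<Rightarrow> ('h \<Rightarrow> 'h) set \<Rightarrow> bool" where
  "nonconfusing gH V \<longleftrightarrow> (\<exists>k>0. \<forall>\<Gamma>\<in>reach_classes V. \<forall>s1 s2.
      equiv_k gH V k \<Gamma> s1 s2 \<longrightarrow> gH s1 = gH s2)"

end

theory Submission
  imports Defs
begin

text \<open>Given a reachability class \<Gamma> of the second algebra, let the lifted class \<Delta> be an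
  \<alpha>-class that is reach-minimal among the \<alpha>-values of forests whose \<beta>-value lies in \<Gamma>. A forest whose
  \<beta>-value lies in \<Gamma> is cut at depth k and below every subforest strictly above \<Gamma>; each
  removed subforest is replaced by a representative with the same \<beta>-value, chosen with
  \<alpha>-value in \<Delta> when its \<beta>-value is in \<Gamma>. This preserves \<beta>, and afterwards the
  \<alpha>-labelling relative to \<Delta> up to depth k is determined by the \<beta>-labelling relative to
  \<Gamma>: subforests above \<Gamma> became fixed representatives, and every other cut subforest
  reaches \<Delta>, where minimality of \<Delta> traps it. So \<beta>-equivalence of depth k for \<Gamma>
  turns into \<alpha>-equivalence of depth k for \<Delta> (or plain equality of \<alpha>-values), and
  nonconfusion of \<alpha> together with the factorisation gives equal \<beta>-values.\<close>

lemma sim_refl: "sim k s s"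
  by (cases k) auto

lemma sim_sym: "sim k s t \<Longrightarrow> sim k t s"
  by (cases k) auto

lemma sim_trans: "sim k s t \<Longrightarrow> sim k t u \<Longrightarrow> sim k s u"
  by (cases k) auto

lemma sim_class_eq_iff: "{u. sim k s u} = {u. sim k t u} \<longleftrightarrow> sim k s t"
  using sim_refl[of k t] sim_sym[of k] sim_trans[of k] by blast

lemma image_eq_iff_rel_set: "f ` A = f ` B \<longleftrightarrow> rel_set (\<lambda>x y. f x = f y) A B"
  unfolding rel_set_def set_eq_iff image_iff by metis

lemma rel_set_image_iff: "rel_set R (f ` A) (g ` B) \<longleftrightarrow> rel_set (\<lambda>x y. R (f x) (g y)) A B"
  unfolding rel_set_def by blast

lemma rel_set_mono_on:
  "rel_set R A B \<Longrightarrow> (\<And>x y. x \<in> A \<Longrightarrow> y \<in> B \<Longrightarrow> R x y \<Longrightarrow> S x y) \<Longrightarrow> rel_set S A B"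
  unfolding rel_set_def by blast

lemma label_relabel [simp]: "label (relabel f x) = (label x, f (children x))"
  by (cases x) simp

lemma children_relabel [simp]: "children (relabel f x) = relabel_forest f (children x)"
  by (cases x) (simp add: relabel_forest_def)

lemma sim_Suc_relabel_forest_iff:
  "sim (Suc k) (relabel_forest f s) (relabel_forest f s') \<longleftrightarrow>
   rel_set (\<lambda>x x'. label x = label x' \<and> f (children x) = f (children x')
       \<and> sim k (relabel_forest f (children x)) (relabel_forest f (children x')))
     (set s) (set s')"
  unfolding sim.simps relabel_forest_def set_map image_image
  unfolding image_eq_iff_rel_set
  by (simp add: sim_class_eq_iff relabel_forest_def)

lemma sum_list_idem_eq_Sum_set:
  fixes xs :: "'h::comm_monoid_add list"
  assumes idem: "\<forall>x::'h. x + x = x"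
  shows "sum_list xs = \<Sum>(set xs)"
proof (induction xs)
  case (Cons x xs)
  show ?case
  proof (cases "x \<in> set xs")
    case True
    have "x + \<Sum>(set xs) = (x + x) + \<Sum>(set xs - {x})"
      using True by (simp add: sum.remove add.assoc)
    also have "\<dots> = \<Sum>(set xs)"
      using True idem by (simp add: sum.remove)
    finally show ?thesis using Cons True by (simp add: insert_absorb)
  qed (use Cons in simp)
qed simp

lemma reach_refl: "forest_algebra V \<Longrightarrow> reach V h h"
  unfolding forest_algebra_def reach_def by (metis id_apply)

lemma reach_trans: "forest_algebra V \<Longrightarrow> reach V f g \<Longrightarrow> reach V g h \<Longrightarrow> reach V f h"
  unfolding forest_algebra_def reach_def by (metis comp_apply)

lemma not_above_mem: "forest_algebra V \<Longrightarrow> h \<in> \<Gamma> \<Longrightarrow> \<not> above V h \<Gamma>"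
  unfolding above_def using reach_refl by blast

lemma mem_reach_class_of: "forest_algebra V \<Longrightarrow> h \<in> reach_class_of V h"
  unfolding reach_class_of_def using reach_refl by blast

lemma reach_classes_reach:
  assumes "forest_algebra V" and "\<Gamma> \<in> reach_classes V" and "g \<in> \<Gamma>" and "g' \<in> \<Gamma>"
  shows "reach V g g'"
  using assms reach_trans[OF assms(1)]
  unfolding reach_classes_def reach_class_of_def by blast

lemma reach_class_or_above:
  assumes fa: "forest_algebra V" and \<Gamma>: "\<Gamma> \<in> reach_classes V"
    and "g \<in> \<Gamma>" and "reach V g h"
  shows "h \<in> \<Gamma> \<or> above V h \<Gamma>"
proof (cases "reach V h g")
  case True
  then show ?thesis
    using \<Gamma> assms(3,4) reach_trans[OF fa]
    unfolding reach_classes_def reach_class_of_def by blast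
next
  case False
  have "reach V g' h \<and> \<not> reach V h g'" if "g' \<in> \<Gamma>" for g'
    using False that assms(3,4) reach_classes_reach[OF fa \<Gamma>] reach_trans[OF fa] by blast
  then show ?thesis unfolding above_def by blast
qed

lemma ex_reach_minimal:
  fixes f :: "'b \<Rightarrow> 'h::{monoid_add,finite}"
  assumes fa: "forest_algebra V" and "P x"
  shows "\<exists>x. P x \<and> (\<forall>y. P y \<longrightarrow> reach V (f y) (f x) \<longrightarrow> reach V (f x) (f y))"
proof -
  obtain x where "P x"
    and least: "\<And>y. P y \<Longrightarrow> card {g. reach V g (f x)} \<le> card {g. reach V g (f y)}"
    using ex_has_least_nat[of P x "\<lambda>x. card {g. reach V g (f x)}"] assms(2) by blast
  have "reach V (f x) (f y)" if "P y" and "reach V (f y) (f x)" for y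
  proof -
    have "{g. reach V g (f y)} \<subseteq> {g. reach V g (f x)}"
      using that(2) reach_trans[OF fa] by blast
    then have "{g. reach V g (f y)} = {g. reach V g (f x)}"
      using least[OF that(1)] by (simp add: card_seteq)
    then show ?thesis using reach_refl[OF fa] by blast
  qed
  then show ?thesis using \<open>P x\<close> by blast
qed

lemma fa_hom_reach_fill: "fa_hom gH gV V \<Longrightarrow> reach V (gH (fill p t)) (gH t)"
  unfolding fa_hom_def reach_def by blast

lemma fa_hom_reach_children:
  assumes "fa_hom gH gV V" and "x \<in> set s"
  shows "reach V (gH s) (gH (children x))"
proof -
  obtain l r where "s = l @ x # r" using assms(2) by (meson split_list)
  then have "s = fill (CNode l (label x) empty_ctx r) (children x)" by (cases x) simp
  then show ?thesis using fa_hom_reach_fill[OF assms(1)] by metis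
qed

lemma fa_hom_Cons: "fa_hom gH gV V \<Longrightarrow> gH (x # s) = gH [x] + gH s"
  unfolding fa_hom_def by (metis append_Cons append_Nil)

lemma fa_hom_Node: "fa_hom gH gV V \<Longrightarrow> gH [Node a u] = gV (CNode [] a empty_ctx []) (gH u)"
  unfolding fa_hom_def by (metis append_Nil append_Nil2 fill.simps(1,2))

lemma fa_hom_map_Node:
  assumes hom: "fa_hom gH gV V" and "\<forall>x\<in>set s. gH (g x) = gH (children x)"
  shows "gH (map (\<lambda>x. Node (label x) (g x)) s) = gH s"
  using assms(2)
proof (induction s)
  case (Cons x s)
  have "gH (map (\<lambda>x. Node (label x) (g x)) (x # s))
      = gH [Node (label x) (g x)] + gH (map (\<lambda>x. Node (label x) (g x)) s)"
    by (simp add: fa_hom_Cons[OF hom, of _ "map _ s"])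
  also have "\<dots> = gH [x] + gH s"
    using Cons fa_hom_Node[OF hom] by (cases x) simp
  finally show ?case using fa_hom_Cons[OF hom, of x s] by simp
qed simp

lemma fa_hom_eq_Sum_image:
  fixes gH :: "'a forest \<Rightarrow> 'h::comm_monoid_add"
  assumes hom: "fa_hom gH gV V" and idem: "\<forall>x::'h. x + x = x"
  shows "gH s = \<Sum>((\<lambda>x. gH [x]) ` set s)"
proof -
  have "gH s = sum_list (map (\<lambda>x. gH [x]) s)"
  proof (induction s)
    case Nil then show ?case using hom unfolding fa_hom_def by simp
  next
    case (Cons x s) then show ?case using fa_hom_Cons[OF hom, of x s] by simp
  qed
  then show ?thesis using sum_list_idem_eq_Sum_set[OF idem] by simp
qed

lemma fa_hom_eq_if_rel_set:
  fixes gH :: "'a forest \<Rightarrow> 'h::comm_monoid_add"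
  assumes "fa_hom gH gV V" and "\<forall>x::'h. x + x = x"
    and "rel_set (\<lambda>x x'. gH [x] = gH [x']) (set s) (set s')"
  shows "gH s = gH s'"
  using assms fa_hom_eq_Sum_image[OF assms(1,2)] image_eq_iff_rel_set by metis

locale class_lifting =
  fixes aH :: "'a forest \<Rightarrow> 'h1::comm_monoid_add" and aV :: "'a ctx \<Rightarrow> 'h1 \<Rightarrow> 'h1"
    and V1 :: "('h1 \<Rightarrow> 'h1) set"
    and bH :: "'a forest \<Rightarrow> 'h2::monoid_add" and bV :: "'a ctx \<Rightarrow> 'h2 \<Rightarrow> 'h2"
    and V2 :: "('h2 \<Rightarrow> 'h2) set"
    and \<Gamma> :: "'h2 set" and f0 :: "'a forest"
  assumes fa1: "forest_algebra V1" and fa2: "forest_algebra V2"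
    and idem1: "\<forall>x::'h1. x + x = x"
    and hom1: "fa_hom aH aV V1" and hom2: "fa_hom bH bV V2"
    and bH_surj: "surj bH" and bV_range: "range bV = V2"
    and \<Gamma>: "\<Gamma> \<in> reach_classes V2"
    and f0: "bH f0 \<in> \<Gamma>"
    and f0_minimal: "\<And>s. reach V1 (aH s) (aH f0) \<Longrightarrow> bH s \<in> \<Gamma> \<Longrightarrow> reach V1 (aH f0) (aH s)"
begin

definition lifted_class :: "'h1 set" where
  "lifted_class = reach_class_of V1 (aH f0)"

lemma lifted_class_in_reach_classes: "lifted_class \<in> reach_classes V1"
  unfolding lifted_class_def reach_classes_def by blast

lemma aH_in_lifted_class:
  assumes "reach V1 (aH s) h" and "h \<in> lifted_class" and "bH s \<in> \<Gamma>"
  shows "aH s \<in> lifted_class"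
proof -
  have "reach V1 (aH s) (aH f0)"
    using assms(1,2) reach_trans[OF fa1] unfolding lifted_class_def reach_class_of_def by blast
  then show ?thesis
    using f0_minimal assms(3) unfolding lifted_class_def reach_class_of_def by blast
qed

lemma ex_lifted_preimage: "\<exists>s. bH s = h \<and> (h \<in> \<Gamma> \<longrightarrow> aH s \<in> lifted_class)"
proof (cases "h \<in> \<Gamma>")
  case True
  then have "reach V2 h (bH f0)" using reach_classes_reach[OF fa2 \<Gamma>] f0 by blast
  then obtain p where p: "h = bV p (bH f0)" using bV_range unfolding reach_def by blast
  have "bH (fill p f0) = h" using p hom2 unfolding fa_hom_def by simp
  moreover have "reach V1 (aH (fill p f0)) (aH f0)" using fa_hom_reach_fill[OF hom1] .
  ultimately have "aH (fill p f0) \<in> lifted_class"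
    using aH_in_lifted_class True mem_reach_class_of[OF fa1] unfolding lifted_class_def by blast
  then show ?thesis using \<open>bH (fill p f0) = h\<close> by blast
qed (use bH_surj in \<open>metis surjD\<close>)

definition rep :: "'h2 \<Rightarrow> 'a forest" where
  "rep h = (SOME s. bH s = h \<and> (h \<in> \<Gamma> \<longrightarrow> aH s \<in> lifted_class))"

lemma bH_rep: "bH (rep h) = h"
  and aH_rep: "h \<in> \<Gamma> \<Longrightarrow> aH (rep h) \<in> lifted_class"
  using someI_ex[OF ex_lifted_preimage[of h]] unfolding rep_def by blast+

abbreviation high :: "'a forest \<Rightarrow> bool" where
  "high t \<equiv> above V2 (bH t) \<Gamma>"

definition at_or_above :: "'a forest \<Rightarrow> bool" where
  "at_or_above t \<longleftrightarrow> (\<exists>g\<in>\<Gamma>. reach V2 g (bH t))"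

lemma at_or_above_children: "at_or_above t \<Longrightarrow> x \<in> set t \<Longrightarrow> at_or_above (children x)"
  unfolding at_or_above_def using fa_hom_reach_children[OF hom2] reach_trans[OF fa2] by blast

lemma at_or_above_not_high: "at_or_above t \<Longrightarrow> \<not> high t \<Longrightarrow> bH t \<in> \<Gamma>"
  unfolding at_or_above_def using reach_class_or_above[OF fa2 \<Gamma>] by blast

primrec cut :: "nat \<Rightarrow> 'a forest \<Rightarrow> 'a forest" where
  "cut 0 t = rep (bH t)"
| "cut (Suc m) t =
     (if high t then rep (bH t) else map (\<lambda>x. Node (label x) (cut m (children x))) t)"

text \<open>These are the forests whose cut reaches the lifted class; for all others the \<alpha>-value of
  the cut is determined by the \<beta>-data.\<close>

primrec low_chain :: "nat \<Rightarrow> 'a forest \<Rightarrow> bool" where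
  "low_chain 0 t = (\<not> high t)"
| "low_chain (Suc m) t = (\<not> high t \<and> (\<exists>x\<in>set t. low_chain m (children x)))"

lemma bH_cut: "bH (cut m t) = bH t"
proof (induction m arbitrary: t)
  case (Suc m)
  then show ?case using fa_hom_map_Node[OF hom2] bH_rep by simp
qed (simp add: bH_rep)

lemma cut_high: "high t \<Longrightarrow> cut m t = rep (bH t)"
  by (cases m) simp_all

lemma low_chain_not_high: "low_chain m t \<Longrightarrow> \<not> high t"
  by (cases m) simp_all

lemma aH_cut_in_lifted_class: "at_or_above t \<Longrightarrow> low_chain m t \<Longrightarrow> aH (cut m t) \<in> lifted_class"
proof (induction m arbitrary: t)
  case 0
  then show ?case using aH_rep at_or_above_not_high by simp
next
  case (Suc m)
  then obtain x where x: "x \<in> set t" and "low_chain m (children x)" by auto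
  then have "aH (cut m (children x)) \<in> lifted_class"
    using Suc.IH at_or_above_children[OF Suc.prems(1)] by blast
  moreover have "reach V1 (aH (cut (Suc m) t)) (aH (cut m (children x)))"
    using fa_hom_reach_children[OF hom1, of "Node (label x) (cut m (children x))"] x Suc.prems(2)
    by simp
  moreover have "bH (cut (Suc m) t) \<in> \<Gamma>"
    using bH_cut at_or_above_not_high Suc.prems low_chain_not_high by metis
  ultimately show ?case using aH_in_lifted_class by blast
qed

abbreviation labB :: "'a forest \<Rightarrow> 'h2 option" where
  "labB \<equiv> gamma_Gamma bH V2 \<Gamma>"

abbreviation labA :: "'a forest \<Rightarrow> 'h1 option" where
  "labA \<equiv> gamma_Gamma aH V1 lifted_class"

lemma labB_eq_high:
  assumes "labB t1 = labB t2"
  shows "high t1 \<longleftrightarrow> high t2" and "high t1 \<Longrightarrow> bH t1 = bH t2"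
  using assms unfolding gamma_Gamma_def by (auto split: if_splits)

definition cut_agree :: "nat \<Rightarrow> 'a forest \<Rightarrow> 'a forest \<Rightarrow> bool" where
  "cut_agree m t1 t2 \<longleftrightarrow>
     sim m (relabel_forest labA (cut m t1)) (relabel_forest labA (cut m t2))
     \<and> low_chain m t1 = low_chain m t2 \<and> (\<not> low_chain m t1 \<longrightarrow> aH (cut m t1) = aH (cut m t2))"

lemma labA_lifted_class: "aH t \<in> lifted_class \<Longrightarrow> labA t = None"
  unfolding gamma_Gamma_def using not_above_mem[OF fa1] by simp

lemma cut_agree_labA:
  assumes "at_or_above t1" and "at_or_above t2" and "cut_agree m t1 t2"
  shows "labA (cut m t1) = labA (cut m t2)"
proof (cases "low_chain m t1")
  case True
  then have "low_chain m t2" using assms(3) unfolding cut_agree_def by blast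
  then show ?thesis
    using True assms(1,2) aH_cut_in_lifted_class labA_lifted_class by simp
qed (use assms(3) in \<open>simp add: cut_agree_def gamma_Gamma_def\<close>)

lemma cut_agree_Suc:
  assumes IH: "\<And>t1 t2. at_or_above t1 \<Longrightarrow> at_or_above t2 \<Longrightarrow> labB t1 = labB t2
      \<Longrightarrow> sim m (relabel_forest labB t1) (relabel_forest labB t2) \<Longrightarrow> cut_agree m t1 t2"
    and weak: "at_or_above t1" "at_or_above t2" and not_high: "\<not> high t1" "\<not> high t2"
    and sim: "sim (Suc m) (relabel_forest labB t1) (relabel_forest labB t2)"
  shows "cut_agree (Suc m) t1 t2"
proof -
  define F where "F x = Node (label x) (cut m (children x))" for x
  have cut: "cut (Suc m) t1 = map F t1" "cut (Suc m) t2 = map F t2"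
    using not_high by (simp_all add: F_def)
  have agree: "rel_set (\<lambda>x1 x2. label x1 = label x2 \<and> cut_agree m (children x1) (children x2))
      (set t1) (set t2)"
    using sim unfolding sim_Suc_relabel_forest_iff
    by (rule rel_set_mono_on) (use IH at_or_above_children weak in blast)
  have "rel_set (\<lambda>x1 x2. label x1 = label x2 \<and> labA (children x1) = labA (children x2)
      \<and> sim m (relabel_forest labA (children x1)) (relabel_forest labA (children x2)))
      (set (map F t1)) (set (map F t2))"
    unfolding set_map rel_set_image_iff
  proof (rule rel_set_mono_on[OF agree])
    fix x1 x2 assume "x1 \<in> set t1" "x2 \<in> set t2"
      and "label x1 = label x2 \<and> cut_agree m (children x1) (children x2)"
    then show "label (F x1) = label (F x2) \<and> labA (children (F x1)) = labA (children (F x2))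
      \<and> sim m (relabel_forest labA (children (F x1))) (relabel_forest labA (children (F x2)))"
      using cut_agree_labA at_or_above_children weak unfolding F_def cut_agree_def by simp
  qed
  then have "sim (Suc m)
      (relabel_forest labA (cut (Suc m) t1)) (relabel_forest labA (cut (Suc m) t2))"
    unfolding cut sim_Suc_relabel_forest_iff .
  moreover have low_chain_eq: "low_chain (Suc m) t1 = low_chain (Suc m) t2"
    using agree not_high unfolding cut_agree_def rel_set_def by auto
  moreover have "aH (map F t1) = aH (map F t2)" if "\<not> low_chain (Suc m) t1"
  proof (rule fa_hom_eq_if_rel_set[OF hom1 idem1])
    have "\<not> low_chain m (children x)" if "x \<in> set t1 \<union> set t2" for x
      using \<open>\<not> low_chain (Suc m) t1\<close> low_chain_eq not_high that by auto
    then show "rel_set (\<lambda>x x'. aH [x] = aH [x']) (set (map F t1)) (set (map F t2))"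
      unfolding set_map rel_set_image_iff
      by (rule_tac rel_set_mono_on[OF agree])
        (auto simp: F_def cut_agree_def fa_hom_Node[OF hom1])
  qed
  ultimately show ?thesis unfolding cut_agree_def cut by blast
qed

lemma cut_agree:
  "at_or_above t1 \<Longrightarrow> at_or_above t2 \<Longrightarrow> labB t1 = labB t2
    \<Longrightarrow> sim m (relabel_forest labB t1) (relabel_forest labB t2) \<Longrightarrow> cut_agree m t1 t2"
proof (induction m arbitrary: t1 t2)
  case 0
  then show ?case using labB_eq_high[OF "0.prems"(3)] unfolding cut_agree_def by simp
next
  case (Suc m)
  show ?case
  proof (cases "high t1")
    case True
    then have "cut (Suc m) t1 = cut (Suc m) t2"
      using labB_eq_high[OF Suc.prems(3)] cut_high by metis
    moreover have "\<not> low_chain (Suc m) t1" "\<not> low_chain (Suc m) t2"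
      using True labB_eq_high[OF Suc.prems(3)] low_chain_not_high by blast+
    ultimately show ?thesis
      unfolding cut_agree_def by (simp add: sim_refl del: low_chain.simps cut.simps)
  next
    case False
    then have "\<not> high t2" using labB_eq_high(1)[OF Suc.prems(3)] by blast
    then show ?thesis using cut_agree_Suc Suc False by blast
  qed
qed

lemma aH_cut_eq:
  assumes nc: "\<forall>s1 s2. equiv_k aH V1 k lifted_class s1 s2 \<longrightarrow> aH s1 = aH s2"
    and equiv: "equiv_k bH V2 k \<Gamma> s1 s2"
  shows "aH (cut k s1) = aH (cut k s2)"
proof -
  have \<Gamma>s: "bH s1 \<in> \<Gamma>" "bH s2 \<in> \<Gamma>"
    and "sim k (relabel_forest labB s1) (relabel_forest labB s2)"
    using equiv unfolding equiv_k_def by auto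
  moreover have "at_or_above s1" "at_or_above s2"
    using \<Gamma>s reach_refl[OF fa2] unfolding at_or_above_def by blast+
  moreover have "labB s1 = labB s2"
    using \<Gamma>s not_above_mem[OF fa2] unfolding gamma_Gamma_def by simp
  ultimately have agree: "cut_agree k s1 s2" using cut_agree by blast
  show ?thesis
  proof (cases "low_chain k s1")
    case True
    then have "aH (cut k s1) \<in> lifted_class" "aH (cut k s2) \<in> lifted_class"
      using agree aH_cut_in_lifted_class \<open>at_or_above s1\<close> \<open>at_or_above s2\<close>
      unfolding cut_agree_def by auto
    then show ?thesis using nc agree unfolding equiv_k_def cut_agree_def by blast
  qed (use agree in \<open>simp add: cut_agree_def\<close>)
qed

end

theorem lemma6:
  fixes aH :: "('a::finite) forest \<Rightarrow> 'h1::{comm_monoid_add,finite}"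
    and aV :: "'a ctx \<Rightarrow> 'h1 \<Rightarrow> 'h1"
    and V1 :: "('h1 \<Rightarrow> 'h1) set"
    and bH :: "'a forest \<Rightarrow> 'h2::{comm_monoid_add,finite}"
    and bV :: "'a ctx \<Rightarrow> 'h2 \<Rightarrow> 'h2"
    and V2 :: "('h2 \<Rightarrow> 'h2) set"
  assumes "forest_algebra V1" and "forest_algebra V2"
    and "\<forall>x::'h1. x + x = x" and "\<forall>x::'h2. x + x = x"
    and "fa_hom aH aV V1" and "fa_onto aH aV V1"
    and "fa_hom bH bV V2" and "fa_onto bH bV V2"
    and "factors_through bH bV aH aV"
    and "nonconfusing aH V1"
  shows "nonconfusing bH V2"
proof -
  obtain k where "k > 0" and nc: "\<forall>\<Delta>\<in>reach_classes V1. \<forall>s1 s2.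
      equiv_k aH V1 k \<Delta> s1 s2 \<longrightarrow> aH s1 = aH s2"
    using assms(10) unfolding nonconfusing_def by blast
  have "bH s1 = bH s2" if \<Gamma>: "\<Gamma> \<in> reach_classes V2" and equiv: "equiv_k bH V2 k \<Gamma> s1 s2"
    for \<Gamma> s1 s2
  proof -
    have "bH s1 \<in> \<Gamma>" using equiv unfolding equiv_k_def by blast
    then obtain f0 where "bH f0 \<in> \<Gamma>"
      and "\<forall>s. bH s \<in> \<Gamma> \<longrightarrow> reach V1 (aH s) (aH f0) \<longrightarrow> reach V1 (aH f0) (aH s)"
      using ex_reach_minimal[OF assms(1), of "\<lambda>s. bH s \<in> \<Gamma>"] by blast
    then interpret class_lifting aH aV V1 bH bV V2 \<Gamma> f0
      using assms \<Gamma> unfolding fa_onto_def by unfold_locales auto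
    have "aH (cut k s1) = aH (cut k s2)"
      using aH_cut_eq nc lifted_class_in_reach_classes equiv by blast
    then have "bH (cut k s1) = bH (cut k s2)"
      using assms(9) unfolding factors_through_def by blast
    then show ?thesis using bH_cut by simp
  qed
  then show ?thesis using \<open>k > 0\<close> unfolding nonconfusing_def by blast
qed

end
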